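(* Let $n\ge 2$ and let $P=c_1\vee\dots\vee c_m$ be a Boolean formula in disjunctive normal form over variables $a_1,\dots,a_n$, where each clause $c_j$ is a conjunction of at least one literal. Let $X=\{x_1,\dots,x_n,t_1,\dots,t_n,f_1,\dots,f_n\}$ (all distinct) and set $x_{n+1}=x_1$. For each $j$ let $S_j=\{t_i: a_i \text{ occurs in } c_j\}\cup\{f_i:\neg a_i\text{ occurs in } c_j\}$. Let $\Sigma$ consist of the implications $\{x_i,t_i\}\rightarrow\{x_{i+1}\}$ and $\{x_i,f_i\}\rightarrow\{x_{i+1}\}$ for $1\le i\le n$, together with $S_j\rightarrow\{x_1\}$ for $1\le j\le m$. Then the closure system on $X$ associated with $\Sigma$ is a convex geometry if and only if $P$ is a tautology (true under every truth assignment).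
   Context: An implication on a set $X$ is a pair $A\rightarrow B$ with $A,B\subseteq X$, $B\ne\emptyset$. For a set $\Sigma$ of implications on $X$, the associated closure system $\langle X,\phi\rangle$ has as closed sets exactly the $S\subseteq X$ such that $A\subseteq S$ implies $B\subseteq S$ for every $(A\rightarrow B)\in\Sigma$, and $\phi(A)$ is the intersection of closed sets containing $A$. A convex geometry is a finite closure system with $\phi(\emptyset)=\emptyset$ satisfying the anti-exchange property: for every closed set $A\subsetneq X$ and all distinct $x,y\in X\setminus A$, $y\notin\phi(A\cup\{x\})$ or $x\notin\phi(A\cup\{y\})$ (equivalently, for every closed $A\subsetneq X$ there is $e\in X\setminus A$ with $A\cup\{e\}$ closed). *)

theory Defs
  imports Main
begin

type_synonym 'a implication = "'a set \<times> 'a set"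

definition is_implication_on :: "'a set \<Rightarrow> 'a implication \<Rightarrow> bool" where
  "is_implication_on X imp \<longleftrightarrow> fst imp \<subseteq> X \<and> snd imp \<subseteq> X \<and> snd imp \<noteq> {}"

definition imp_closed :: "'a set \<Rightarrow> 'a implication set \<Rightarrow> 'a set \<Rightarrow> bool" where
  "imp_closed X \<Sigma> S \<longleftrightarrow> S \<subseteq> X \<and> (\<forall>(A, B) \<in> \<Sigma>. A \<subseteq> S \<longrightarrow> B \<subseteq> S)"

definition imp_closure :: "'a set \<Rightarrow> 'a implication set \<Rightarrow> 'a set \<Rightarrow> 'a set" where
  "imp_closure X \<Sigma> A = \<Inter> {S. imp_closed X \<Sigma> S \<and> A \<subseteq> S}"

definition closure_system :: "'a set \<Rightarrow> ('a set \<Rightarrow> 'a set) \<Rightarrow> bool" where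
  "closure_system X \<phi> \<longleftrightarrow>
     (\<forall>A. A \<subseteq> X \<longrightarrow> A \<subseteq> \<phi> A \<and> \<phi> A \<subseteq> X \<and> \<phi> (\<phi> A) = \<phi> A) \<and>
     (\<forall>A B. A \<subseteq> B \<and> B \<subseteq> X \<longrightarrow> \<phi> A \<subseteq> \<phi> B)"

definition convex_geometry :: "'a set \<Rightarrow> ('a set \<Rightarrow> 'a set) \<Rightarrow> bool" where
  "convex_geometry X \<phi> \<longleftrightarrow>
     finite X \<and> closure_system X \<phi> \<and> \<phi> {} = {} \<and>
     (\<forall>A. A \<subseteq> X \<and> \<phi> A = A \<and> A \<noteq> X \<longrightarrow>
        (\<forall>x \<in> X - A. \<forall>y \<in> X - A. x \<noteq> y \<longrightarrow>
            y \<notin> \<phi> (A \<union> {x}) \<or> x \<notin> \<phi> (A \<union> {y})))"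

datatype elem = Xe nat | Te nat | Fe nat

definition ground :: "nat \<Rightarrow> elem set" where
  "ground n = Xe ` {1..n} \<union> Te ` {1..n} \<union> Fe ` {1..n}"

definition nxt :: "nat \<Rightarrow> nat \<Rightarrow> nat" where
  "nxt n i = (if i = n then 1 else i + 1)"

text \<open>A literal is (i, True) for a_i and (i, False) for the negation of a_i.
  A clause is a set of literals (a conjunction); a DNF formula is a list of clauses
  c_1, ..., c_m (a disjunction).\<close>
type_synonym literal = "nat \<times> bool"
type_synonym clause = "literal set"
type_synonym dnf = "clause list"

definition clause_sat :: "(nat \<Rightarrow> bool) \<Rightarrow> clause \<Rightarrow> bool" where
  "clause_sat v c \<longleftrightarrow> (\<forall>(i, b) \<in> c. v i = b)"

definition dnf_sat :: "(nat \<Rightarrow> bool) \<Rightarrow> dnf \<Rightarrow> bool" where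
  "dnf_sat v P \<longleftrightarrow> (\<exists>c \<in> set P. clause_sat v c)"

definition tautology :: "dnf \<Rightarrow> bool" where
  "tautology P \<longleftrightarrow> (\<forall>v. dnf_sat v P)"

definition well_formed_dnf :: "nat \<Rightarrow> dnf \<Rightarrow> bool" where
  "well_formed_dnf n P \<longleftrightarrow> (\<forall>c \<in> set P. c \<noteq> {} \<and> (\<forall>(i, b) \<in> c. 1 \<le> i \<and> i \<le> n))"

definition clause_set :: "clause \<Rightarrow> elem set" where
  "clause_set c = {Te i | i. (i, True) \<in> c} \<union> {Fe i | i. (i, False) \<in> c}"

definition sigma :: "nat \<Rightarrow> dnf \<Rightarrow> elem implication set" where
  "sigma n P =
     {({Xe i, Te i}, {Xe (nxt n i)}) | i. i \<in> {1..n}} \<union>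
     {({Xe i, Fe i}, {Xe (nxt n i)}) | i. i \<in> {1..n}} \<union>
     {(clause_set c, {Xe 1}) | c. c \<in> set P}"

end

theory Submission
  imports Defs
begin

text \<open>The implications x_i t_i \<rightarrow> x_(i+1) and x_i f_i \<rightarrow> x_(i+1) move an x-element one
  step around the cycle x_1, ..., x_n, x_1 whenever the index it leaves carries a literal.
  If v falsifies P, the set of literals true under v is closed (no clause fires), and adding
  any x_p to it generates every x_q; so x_1 and x_2 violate anti-exchange.
  If P is a tautology, a closed set containing a literal of every index contains some clause,
  hence x_1, hence every x_q. So a closed set A missing some x_p misses both literals of some
  index k: the cycle is cut after x_k, and adding x_p to A only generates the arc from x_p to
  x_k. Of two x-elements outside A, the one further along this arc does not generate the other;
  the remaining elements generate nothing except x-elements.\<close>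

lemma imp_closure_least:
  assumes "imp_closed X \<Sigma> S" "A \<subseteq> S"
  shows "imp_closure X \<Sigma> A \<subseteq> S"
  using assms unfolding imp_closure_def by auto

lemma imp_closure_upper: "A \<subseteq> imp_closure X \<Sigma> A"
  unfolding imp_closure_def by auto

lemma imp_closure_memI:
  assumes "\<And>S. imp_closed X \<Sigma> S \<Longrightarrow> A \<subseteq> S \<Longrightarrow> y \<in> S"
  shows "y \<in> imp_closure X \<Sigma> A"
  using assms unfolding imp_closure_def by auto

lemma imp_closed_imp_closure:
  assumes "\<forall>(B, C) \<in> \<Sigma>. C \<subseteq> X" "A \<subseteq> X"
  shows "imp_closed X \<Sigma> (imp_closure X \<Sigma> A)"
proof -
  have "imp_closed X \<Sigma> X"
    using assms(1) unfolding imp_closed_def by auto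
  then have "imp_closure X \<Sigma> A \<subseteq> X"
    using imp_closure_least assms(2) by blast
  moreover have "C \<subseteq> imp_closure X \<Sigma> A"
    if BC: "(B, C) \<in> \<Sigma>" "B \<subseteq> imp_closure X \<Sigma> A" for B C
  proof -
    have "C \<subseteq> S" if S: "imp_closed X \<Sigma> S" "A \<subseteq> S" for S
      using BC imp_closure_least[OF S] S(1) unfolding imp_closed_def by blast
    then show ?thesis
      unfolding imp_closure_def by blast
  qed
  ultimately show ?thesis
    unfolding imp_closed_def by blast
qed

lemma imp_closure_closed_eq:
  assumes "imp_closed X \<Sigma> A"
  shows "imp_closure X \<Sigma> A = A"
  by (rule antisym[OF imp_closure_least[OF assms order_refl] imp_closure_upper])

lemma closure_system_imp_closure:
  assumes "\<forall>(B, C) \<in> \<Sigma>. C \<subseteq> X"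
  shows "closure_system X (imp_closure X \<Sigma>)"
  unfolding closure_system_def
proof (intro conjI allI impI)
  fix A assume "A \<subseteq> X"
  then have closed: "imp_closed X \<Sigma> (imp_closure X \<Sigma> A)"
    using imp_closed_imp_closure[OF assms] by blast
  show "A \<subseteq> imp_closure X \<Sigma> A" by (rule imp_closure_upper)
  show "imp_closure X \<Sigma> A \<subseteq> X" using closed unfolding imp_closed_def by blast
  show "imp_closure X \<Sigma> (imp_closure X \<Sigma> A) = imp_closure X \<Sigma> A"
    using imp_closure_closed_eq[OF closed] .
next
  fix A B assume "A \<subseteq> B \<and> B \<subseteq> X"
  then show "imp_closure X \<Sigma> A \<subseteq> imp_closure X \<Sigma> B"
    unfolding imp_closure_def by auto
qed

lemma convex_geometry_imp_closure_iff:
  assumes "\<forall>(B, C) \<in> \<Sigma>. C \<subseteq> X"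
  shows "convex_geometry X (imp_closure X \<Sigma>) \<longleftrightarrow> finite X \<and> imp_closed X \<Sigma> {} \<and>
    (\<forall>A. imp_closed X \<Sigma> A \<and> A \<noteq> X \<longrightarrow>
       (\<forall>x \<in> X - A. \<forall>y \<in> X - A. x \<noteq> y \<longrightarrow>
          y \<notin> imp_closure X \<Sigma> (A \<union> {x}) \<or> x \<notin> imp_closure X \<Sigma> (A \<union> {y})))"
proof -
  have closed_iff_fixed: "imp_closed X \<Sigma> A \<longleftrightarrow> A \<subseteq> X \<and> imp_closure X \<Sigma> A = A" for A
    using imp_closed_imp_closure[OF assms] imp_closure_closed_eq
    by (metis imp_closed_def)
  show ?thesis
    unfolding convex_geometry_def closed_iff_fixed
    using closure_system_imp_closure[OF assms] by auto
qed

lemma ground_simps [simp]: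
  "Xe i \<in> ground n \<longleftrightarrow> i \<in> {1..n}"
  "Te i \<in> ground n \<longleftrightarrow> i \<in> {1..n}"
  "Fe i \<in> ground n \<longleftrightarrow> i \<in> {1..n}"
  unfolding ground_def by auto

lemma finite_ground: "finite (ground n)"
  unfolding ground_def by simp

lemma nxt_in_range: "i \<in> {1..n} \<Longrightarrow> nxt n i \<in> {1..n}"
  unfolding nxt_def by auto

lemma sigma_conclusions:
  assumes "1 \<le> n"
  shows "\<forall>(B, C) \<in> sigma n P. C \<subseteq> ground n"
  using assms unfolding sigma_def nxt_def by auto

lemma imp_closed_sigma_iff:
  "imp_closed (ground n) (sigma n P) S \<longleftrightarrow> S \<subseteq> ground n \<and>
    (\<forall>i\<in>{1..n}. Xe i \<in> S \<and> (Te i \<in> S \<or> Fe i \<in> S) \<longrightarrow> Xe (nxt n i) \<in> S) \<and>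
    (\<forall>c\<in>set P. clause_set c \<subseteq> S \<longrightarrow> Xe 1 \<in> S)"
  unfolding imp_closed_def sigma_def by (simp add: ball_Un Ball_def, blast)

lemma imp_closed_sigma_empty:
  assumes "well_formed_dnf n P"
  shows "imp_closed (ground n) (sigma n P) {}"
proof -
  have "clause_set c \<noteq> {}" if ne: "c \<noteq> {}" for c
  proof -
    obtain i b where "(i, b) \<in> c" using ne by auto
    then show ?thesis unfolding clause_set_def by (cases b) auto
  qed
  then show ?thesis
    using assms unfolding imp_closed_sigma_iff well_formed_dnf_def by auto
qed

lemma imp_closed_sigma_Un_all_x:
  assumes "1 \<le> n" "S \<subseteq> ground n"
  shows "imp_closed (ground n) (sigma n P) (S \<union> Xe ` {1..n})"
  using assms nxt_in_range unfolding imp_closed_sigma_iff by auto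

lemma imp_closed_sigma_step:
  assumes "imp_closed (ground n) (sigma n P) S" "i \<in> {1..n}" "Xe i \<in> S" "Te i \<in> S \<or> Fe i \<in> S"
  shows "Xe (nxt n i) \<in> S"
  using assms unfolding imp_closed_sigma_iff by blast

lemma imp_closed_sigma_clause:
  assumes "imp_closed (ground n) (sigma n P) S" "c \<in> set P" "clause_set c \<subseteq> S"
  shows "Xe 1 \<in> S"
  using assms unfolding imp_closed_sigma_iff by blast

lemma imp_closed_sigma_x_chain:
  assumes closed: "imp_closed (ground n) (sigma n P) S"
    and literals: "\<forall>i\<in>{1..n}. Te i \<in> S \<or> Fe i \<in> S"
    and "Xe a \<in> S" "1 \<le> a" "a \<le> b" "b \<le> n"
  shows "Xe b \<in> S"
  using \<open>a \<le> b\<close> \<open>b \<le> n\<close>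
proof (induction b rule: dec_induct)
  case base
  show ?case by fact
next
  case (step i)
  then have i: "i \<in> {1..n}" and "nxt n i = Suc i"
    using \<open>1 \<le> a\<close> unfolding nxt_def by auto
  then show ?case
    using imp_closed_sigma_step[OF closed i] step literals by simp
qed

lemma imp_closed_sigma_all_x:
  assumes closed: "imp_closed (ground n) (sigma n P) S"
    and literals: "\<forall>i\<in>{1..n}. Te i \<in> S \<or> Fe i \<in> S"
    and "Xe p \<in> S" "p \<in> {1..n}" "q \<in> {1..n}"
  shows "Xe q \<in> S"
proof -
  have "Xe n \<in> S"
    using imp_closed_sigma_x_chain[OF closed literals, of p n] assms(3-4) by auto
  moreover have "nxt n n = 1" unfolding nxt_def by simp
  ultimately have "Xe 1 \<in> S"
    using imp_closed_sigma_step[OF closed, of n] literals assms(4) by auto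
  then show ?thesis
    using imp_closed_sigma_x_chain[OF closed literals, of 1 q] assms(5) by auto
qed

definition assignment_set :: "nat \<Rightarrow> (nat \<Rightarrow> bool) \<Rightarrow> elem set" where
  "assignment_set n v = {Te i | i. i \<in> {1..n} \<and> v i} \<union> {Fe i | i. i \<in> {1..n} \<and> \<not> v i}"

lemma clause_set_subset_assignment_set_iff:
  assumes "\<forall>(i, b) \<in> c. i \<in> {1..n}"
  shows "clause_set c \<subseteq> assignment_set n v \<longleftrightarrow> clause_sat v c"
proof
  assume "clause_set c \<subseteq> assignment_set n v"
  then have "v i = b" if "(i, b) \<in> c" for i b
    using that unfolding clause_set_def assignment_set_def by (cases b) auto
  then show "clause_sat v c"
    unfolding clause_sat_def by blast
next
  assume "clause_sat v c"
  then show "clause_set c \<subseteq> assignment_set n v"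
    using assms unfolding clause_sat_def clause_set_def assignment_set_def by auto
qed

lemma imp_closed_sigma_assignment_set:
  assumes "well_formed_dnf n P" "\<not> dnf_sat v P"
  shows "imp_closed (ground n) (sigma n P) (assignment_set n v)"
  using assms clause_set_subset_assignment_set_iff
  unfolding imp_closed_sigma_iff well_formed_dnf_def dnf_sat_def
  by (auto simp: assignment_set_def)

lemma imp_closed_sigma_tautology_x1:
  assumes "well_formed_dnf n P" "tautology P"
    and closed: "imp_closed (ground n) (sigma n P) S"
    and literals: "\<forall>i\<in>{1..n}. Te i \<in> S \<or> Fe i \<in> S"
  shows "Xe 1 \<in> S"
proof -
  define v where "v i \<longleftrightarrow> Te i \<in> S" for i
  obtain c where c: "c \<in> set P" "clause_sat v c"
    using assms(2) unfolding tautology_def dnf_sat_def by blast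
  have "assignment_set n v \<subseteq> S"
    using literals unfolding assignment_set_def v_def by auto
  moreover have "\<forall>(i, b) \<in> c. i \<in> {1..n}"
    using assms(1) c(1) unfolding well_formed_dnf_def by auto
  then have "clause_set c \<subseteq> assignment_set n v"
    using clause_set_subset_assignment_set_iff c(2) by blast
  ultimately show ?thesis
    by (intro imp_closed_sigma_clause[OF closed c(1)]) (rule order_trans)
qed

lemma imp_closure_sigma_assignment_set_x:
  assumes "p \<in> {1..n}" "q \<in> {1..n}"
  shows "Xe q \<in> imp_closure (ground n) (sigma n P) (assignment_set n v \<union> {Xe p})"
proof (rule imp_closure_memI)
  fix S assume closed: "imp_closed (ground n) (sigma n P) S"
    and sub: "assignment_set n v \<union> {Xe p} \<subseteq> S"
  then have "\<forall>i\<in>{1..n}. Te i \<in> S \<or> Fe i \<in> S"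
    unfolding assignment_set_def by blast
  then show "Xe q \<in> S"
    using imp_closed_sigma_all_x[OF closed] sub assms by blast
qed

text \<open>The position of j on the cycle read from x_(k+1) onwards, so that x_k comes last.\<close>

definition cycle_rank :: "nat \<Rightarrow> nat \<Rightarrow> nat \<Rightarrow> nat" where
  "cycle_rank n k j = (if k < j then j else j + n)"

lemma cycle_rank_nxt:
  "k \<in> {1..n} \<Longrightarrow> i \<in> {1..n} \<Longrightarrow> i \<noteq> k \<Longrightarrow> cycle_rank n k i < cycle_rank n k (nxt n i)"
  unfolding cycle_rank_def nxt_def by auto

lemma inj_on_cycle_rank: "inj_on (cycle_rank n k) {1..n}"
  unfolding inj_on_def cycle_rank_def by auto

lemma imp_closed_sigma_Un_arc:
  assumes closed: "imp_closed (ground n) (sigma n P) A"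
    and k: "k \<in> {1..n}" "Te k \<notin> A" "Fe k \<notin> A"
  shows "imp_closed (ground n) (sigma n P)
           (A \<union> {Xe j | j. j \<in> {1..n} \<and> cycle_rank n k r \<le> cycle_rank n k j})"
    (is "imp_closed _ _ (A \<union> ?arc)")
  unfolding imp_closed_sigma_iff
proof (intro conjI ballI impI)
  show "A \<union> ?arc \<subseteq> ground n"
    using closed unfolding imp_closed_def by auto
next
  fix i assume i: "i \<in> {1..n}" "Xe i \<in> A \<union> ?arc \<and> (Te i \<in> A \<union> ?arc \<or> Fe i \<in> A \<union> ?arc)"
  then have literal: "Te i \<in> A \<or> Fe i \<in> A" by auto
  show "Xe (nxt n i) \<in> A \<union> ?arc"
  proof (cases "Xe i \<in> A")
    case True
    then show ?thesis using imp_closed_sigma_step[OF closed i(1) _ literal] by blast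
  next
    case False
    with i have "cycle_rank n k r \<le> cycle_rank n k i" by auto
    moreover have "i \<noteq> k" using literal k by auto
    ultimately show ?thesis
      using cycle_rank_nxt[OF k(1) i(1)] nxt_in_range[OF i(1)] by fastforce
  qed
next
  fix c assume c: "c \<in> set P" "clause_set c \<subseteq> A \<union> ?arc"
  then have "clause_set c \<subseteq> A" unfolding clause_set_def by auto
  then show "Xe 1 \<in> A \<union> ?arc" using imp_closed_sigma_clause[OF closed c(1)] by blast
qed

lemma imp_closure_sigma_x_not_mem:
  assumes closed: "imp_closed (ground n) (sigma n P) A"
    and k: "k \<in> {1..n}" "Te k \<notin> A" "Fe k \<notin> A"
    and "p \<in> {1..n}" "Xe q \<notin> A" "cycle_rank n k q < cycle_rank n k p"
  shows "Xe q \<notin> imp_closure (ground n) (sigma n P) (A \<union> {Xe p})"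
proof -
  have "imp_closure (ground n) (sigma n P) (A \<union> {Xe p})
          \<subseteq> A \<union> {Xe j | j. j \<in> {1..n} \<and> cycle_rank n k p \<le> cycle_rank n k j}"
    using \<open>p \<in> {1..n}\<close> by (intro imp_closure_least[OF imp_closed_sigma_Un_arc[OF closed k]]) auto
  then show ?thesis using assms(6,7) by auto
qed

lemma imp_closure_sigma_anti_exchange:
  assumes "1 \<le> n" "well_formed_dnf n P" "tautology P"
    and closed: "imp_closed (ground n) (sigma n P) A"
    and "x \<in> ground n - A" "y \<in> ground n - A" "x \<noteq> y"
  shows "y \<notin> imp_closure (ground n) (sigma n P) (A \<union> {x}) \<or>
         x \<notin> imp_closure (ground n) (sigma n P) (A \<union> {y})"
proof (cases "\<exists>p q. x = Xe p \<and> y = Xe q")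
  case False
  have "A \<union> {z} \<subseteq> ground n" if "z \<in> ground n" for z
    using closed that unfolding imp_closed_def by blast
  then have "imp_closure (ground n) (sigma n P) (A \<union> {z}) \<subseteq> A \<union> {z} \<union> Xe ` {1..n}"
    if "z \<in> ground n" for z
    using that by (intro imp_closure_least[OF imp_closed_sigma_Un_all_x[OF \<open>1 \<le> n\<close>]]) auto
  then show ?thesis
    using False assms(5-7) by blast
next
  case True
  then obtain p q where pq: "x = Xe p" "y = Xe q" by blast
  then have range: "p \<in> {1..n}" "q \<in> {1..n}" and "p \<noteq> q"
    using assms(5-7) by auto
  obtain k where k: "k \<in> {1..n}" "Te k \<notin> A" "Fe k \<notin> A"
  proof (rule ccontr)
    assume "\<not> thesis"
    then have literals: "\<forall>i\<in>{1..n}. Te i \<in> A \<or> Fe i \<in> A" using that by blast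
    then have "Xe 1 \<in> A"
      using imp_closed_sigma_tautology_x1[OF assms(2,3) closed] by blast
    then show False
      using imp_closed_sigma_all_x[OF closed literals _ _ range(1)] \<open>1 \<le> n\<close> assms(5) pq by auto
  qed
  have "cycle_rank n k p \<noteq> cycle_rank n k q"
    using inj_on_cycle_rank range \<open>p \<noteq> q\<close> unfolding inj_on_def by blast
  then show ?thesis
    using imp_closure_sigma_x_not_mem[OF closed k] range assms(5,6) pq
    by (metis DiffD2 linorder_neq_iff)
qed

lemma imp_closure_sigma_not_anti_exchange:
  assumes "2 \<le> n" "well_formed_dnf n P" "\<not> dnf_sat v P"
  obtains A where "imp_closed (ground n) (sigma n P) A" "A \<noteq> ground n"
    "Xe 1 \<in> ground n - A" "Xe 2 \<in> ground n - A"
    "Xe 2 \<in> imp_closure (ground n) (sigma n P) (A \<union> {Xe 1})"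
    "Xe 1 \<in> imp_closure (ground n) (sigma n P) (A \<union> {Xe 2})"
proof
  show "imp_closed (ground n) (sigma n P) (assignment_set n v)"
    using imp_closed_sigma_assignment_set[OF assms(2,3)] .
  show "Xe 1 \<in> ground n - assignment_set n v" "Xe 2 \<in> ground n - assignment_set n v"
    using assms(1) unfolding assignment_set_def by auto
  then show "assignment_set n v \<noteq> ground n" by blast
qed (use imp_closure_sigma_assignment_set_x assms(1) in auto)

theorem theorem5:
  fixes n :: nat and P :: dnf
  assumes "n \<ge> 2"
    and "well_formed_dnf n P"
  shows "convex_geometry (ground n) (imp_closure (ground n) (sigma n P)) \<longleftrightarrow> tautology P"
proof -
  let ?\<phi> = "imp_closure (ground n) (sigma n P)"
  have "1 \<le> n" using assms(1) by simp
  have anti_exchange_iff: "(\<forall>A. imp_closed (ground n) (sigma n P) A \<and> A \<noteq> ground n \<longrightarrow>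
      (\<forall>x \<in> ground n - A. \<forall>y \<in> ground n - A. x \<noteq> y \<longrightarrow>
         y \<notin> ?\<phi> (A \<union> {x}) \<or> x \<notin> ?\<phi> (A \<union> {y}))) \<longleftrightarrow> tautology P"
    (is "?anti_exchange \<longleftrightarrow> _")
  proof
    assume anti_exchange: ?anti_exchange
    show "tautology P"
      unfolding tautology_def
    proof (rule ccontr)
      assume "\<not> (\<forall>v. dnf_sat v P)"
      then obtain v where "\<not> dnf_sat v P" by blast
      then obtain A where "imp_closed (ground n) (sigma n P) A" "A \<noteq> ground n"
        "Xe 1 \<in> ground n - A" "Xe 2 \<in> ground n - A"
        "Xe 2 \<in> ?\<phi> (A \<union> {Xe 1})" "Xe 1 \<in> ?\<phi> (A \<union> {Xe 2})"
        using imp_closure_sigma_not_anti_exchange assms by blast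
      with anti_exchange show False by fastforce
    qed
  qed (use imp_closure_sigma_anti_exchange \<open>1 \<le> n\<close> assms(2) in blast)
  show ?thesis
    unfolding convex_geometry_imp_closure_iff[OF sigma_conclusions[OF \<open>1 \<le> n\<close>]] anti_exchange_iff
    using assms finite_ground imp_closed_sigma_empty by auto
qed

end
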